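(* Let $X=\{X_k\}_{k\in\mathbb Z}$ be a positive strictly stationary time series satisfying Condition 1, and let $m\in\mathbb N$ be fixed. Then for every fixed $k\in\mathbb N$, $D(j,k)/\widetilde D(j,k)\xrightarrow{P}1$ as $j\to\infty$.
   Context: Setup: $\mathbb P\{X_k>x\}\sim c_Xx^{-\alpha}$ as $x\to\infty$, $\alpha>0$, $c_X>0$; $M_n:=\max_{1\le k\le n}X_k$ and $\mathbb P\{M_n\le n^{1/\alpha}x\}=\exp\{-c(n,x)x^{-\alpha}\}$, $x>0$, defines $c(n,x)>0$. Condition 1: there exist $\beta>0$, $R\in\mathbb R$, $\theta\in(0,1]$ and $c_1:(0,\infty)\to[0,\infty)$ with $c_1(x)=\mathcal O(x^{-R})$ as $x\downarrow0$, such that $|c(n,x)-\theta c_X|\le c_1(x)n^{-\beta}$ for all $x>0$ and all $n$. Block maxima: for $2^j>m$, $D(j,k):=\max_{1\le i\le 2^j}X_{2^j(k-1)+i}$ and $\widetilde D(j,k):=\max_{1\le i\le 2^j-m}X_{2^j(k-1)+i}$. *)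

theory Defs
  imports "HOL-Probability.Probability" "HOL-Library.Landau_Symbols"
begin

definition strictly_stationary :: "'a measure \<Rightarrow> (int \<Rightarrow> 'a \<Rightarrow> real) \<Rightarrow> bool" where
  "strictly_stationary M X \<longleftrightarrow>
     (\<forall>I h. finite I \<longrightarrow>
        distr M (Pi\<^sub>M I (\<lambda>_. borel)) (\<lambda>\<omega>. \<lambda>t\<in>I. X (t + h) \<omega>)
      = distr M (Pi\<^sub>M I (\<lambda>_. borel)) (\<lambda>\<omega>. \<lambda>t\<in>I. X t \<omega>))"

definition run_max :: "(int \<Rightarrow> 'a \<Rightarrow> real) \<Rightarrow> nat \<Rightarrow> 'a \<Rightarrow> real" where
  "run_max X n \<omega> = Max ((\<lambda>k. X k \<omega>) ` {1..int n})"

text \<open>c(n,x), defined by P{M_n <= n^(1/alpha) x} = exp(-c(n,x) x^(-alpha)).\<close>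
definition cfun :: "'a measure \<Rightarrow> (int \<Rightarrow> 'a \<Rightarrow> real) \<Rightarrow> real \<Rightarrow> nat \<Rightarrow> real \<Rightarrow> real" where
  "cfun M X \<alpha> n x =
     - ln (measure M {\<omega> \<in> space M. run_max X n \<omega> \<le> real n powr (1 / \<alpha>) * x}) * x powr \<alpha>"

definition condition1 :: "'a measure \<Rightarrow> (int \<Rightarrow> 'a \<Rightarrow> real) \<Rightarrow> real \<Rightarrow> real \<Rightarrow> bool" where
  "condition1 M X \<alpha> cX \<longleftrightarrow>
     (\<exists>\<beta> R \<theta> (c1 :: real \<Rightarrow> real).
        \<beta> > 0 \<and> 0 < \<theta> \<and> \<theta> \<le> 1 \<and>
        (\<forall>x>0. c1 x \<ge> 0) \<and>
        c1 \<in> O[at_right 0](\<lambda>x. x powr (- R)) \<and>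
        (\<forall>n\<ge>1. \<forall>x>0. \<bar>cfun M X \<alpha> n x - \<theta> * cX\<bar> \<le> c1 x * real n powr (- \<beta>)))"

definition blockD :: "(int \<Rightarrow> 'a \<Rightarrow> real) \<Rightarrow> nat \<Rightarrow> nat \<Rightarrow> 'a \<Rightarrow> real" where
  "blockD X j k \<omega> = Max ((\<lambda>i. X (2 ^ j * (int k - 1) + i) \<omega>) ` {1..2 ^ j})"

definition blockDt :: "(int \<Rightarrow> 'a \<Rightarrow> real) \<Rightarrow> nat \<Rightarrow> nat \<Rightarrow> nat \<Rightarrow> 'a \<Rightarrow> real" where
  "blockDt X m j k \<omega> = Max ((\<lambda>i. X (2 ^ j * (int k - 1) + i) \<omega>) ` {1..2 ^ j - int m})"

end

theory Submission
  imports Defs "HOL-Real_Asymp.Real_Asymp"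
begin

(* Fix epsilon > 0 and put N = 2^j - m, so that the block {1..2^j} (shifted by
   h = 2^j (k - 1)) splits into its first N indices and a tail of m indices.
   Whatever level c is chosen, if some observation among the first N exceeds c
   while none of the last m does, then D(j,k) = tilde D(j,k) and the ratio is 1.
   Hence the deviation event is contained in the union of
     {all of the first N observations are <= c}  and  {X_i > c} for the m tail indices,
   and by stationarity its probability is at most P{M_N <= c} + m P{X_0 > c}.
   With c = N^(1/alpha) y, Condition 1 bounds the first term by exp(-a y^(-alpha))
   for a = theta cX / 2, which is small for small y, while the second term tends to 0
   because the tail P{X_0 > x} ~ cX x^(-alpha) vanishes.  Since N -> infinity as
   j -> infinity, the deviation probability tends to 0. *)

lemma stationary_event_shift:
  fixes X :: "int \<Rightarrow> 'a \<Rightarrow> real"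
  assumes stat: "strictly_stationary M X" and meas: "\<And>t. X t \<in> borel_measurable M"
    and fin: "finite I" and P: "Measurable.pred (Pi\<^sub>M I (\<lambda>_. borel)) P"
  shows "measure M {\<omega>\<in>space M. P (\<lambda>t\<in>I. X (t + h) \<omega>)} = measure M {\<omega>\<in>space M. P (\<lambda>t\<in>I. X t \<omega>)}"
proof -
  let ?N = "Pi\<^sub>M I (\<lambda>_. borel :: real measure)"
  let ?S = "{g\<in>space ?N. P g}"
  have S: "?S \<in> sets ?N"
    using P unfolding pred_def .
  have event: "(\<lambda>\<omega>. \<lambda>t\<in>I. X (t + s) \<omega>) -` ?S \<inter> space M = {\<omega>\<in>space M. P (\<lambda>t\<in>I. X (t + s) \<omega>)}"
    and vec: "(\<lambda>\<omega>. \<lambda>t\<in>I. X (t + s) \<omega>) \<in> M \<rightarrow>\<^sub>M ?N" for s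
  proof -
    show vec: "(\<lambda>\<omega>. \<lambda>t\<in>I. X (t + s) \<omega>) \<in> M \<rightarrow>\<^sub>M ?N"
      using meas by (intro measurable_restrict) auto
    show "(\<lambda>\<omega>. \<lambda>t\<in>I. X (t + s) \<omega>) -` ?S \<inter> space M = {\<omega>\<in>space M. P (\<lambda>t\<in>I. X (t + s) \<omega>)}"
      using measurable_space[OF vec] by auto
  qed
  have "measure M {\<omega>\<in>space M. P (\<lambda>t\<in>I. X (t + h) \<omega>)}
      = measure (distr M ?N (\<lambda>\<omega>. \<lambda>t\<in>I. X (t + h) \<omega>)) ?S"
    by (simp only: measure_distr[OF vec S] event)
  also have "\<dots> = measure (distr M ?N (\<lambda>\<omega>. \<lambda>t\<in>I. X (t + 0) \<omega>)) ?S"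
    using stat fin unfolding strictly_stationary_def by simp
  also have "\<dots> = measure M {\<omega>\<in>space M. P (\<lambda>t\<in>I. X t \<omega>)}"
    using measure_distr[OF vec S, of 0] event[of 0] by simp
  finally show ?thesis .
qed

lemma stationary_window_max:
  fixes X :: "int \<Rightarrow> 'a \<Rightarrow> real"
  assumes stat: "strictly_stationary M X" and meas: "\<And>t. X t \<in> borel_measurable M"
    and N: "N \<ge> 1"
  shows "measure M {\<omega>\<in>space M. \<forall>i\<in>{1..int N}. X (h + i) \<omega> \<le> c}
       = measure M {\<omega>\<in>space M. run_max X N \<omega> \<le> c}"
proof -
  have below: "Measurable.pred (Pi\<^sub>M {1..int N} (\<lambda>_. borel)) (\<lambda>g. \<forall>t\<in>{1..int N}. g t \<le> c)"
    unfolding pred_def by (intro sets.sets_Collect_finite_All) (auto simp: borel_measurable_iff_le[symmetric])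
  have "measure M {\<omega>\<in>space M. \<forall>i\<in>{1..int N}. X (h + i) \<omega> \<le> c}
      = measure M {\<omega>\<in>space M. \<forall>i\<in>{1..int N}. X i \<omega> \<le> c}"
    using stationary_event_shift[OF stat meas _ below, of h] by (simp add: add.commute)
  also have "\<dots> = measure M {\<omega>\<in>space M. run_max X N \<omega> \<le> c}"
    using N unfolding run_max_def by (simp add: Max_le_iff)
  finally show ?thesis .
qed

lemma stationary_marginal_tail:
  fixes X :: "int \<Rightarrow> 'a \<Rightarrow> real"
  assumes stat: "strictly_stationary M X" and meas: "\<And>t. X t \<in> borel_measurable M"
  shows "measure M {\<omega>\<in>space M. X t \<omega> > c} = measure M {\<omega>\<in>space M. X 0 \<omega> > c}"
proof -
  have above: "Measurable.pred (Pi\<^sub>M {0::int} (\<lambda>_. borel)) (\<lambda>g. c < g 0)"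
    unfolding pred_def borel_measurable_iff_greater[symmetric] by simp
  show ?thesis
    using stationary_event_shift[OF stat meas _ above, of t] by simp
qed

lemma Max_prefix_if_tail_below:
  fixes f :: "int \<Rightarrow> real"
  assumes "1 \<le> n" "n \<le> l"
    and exceed: "\<exists>i\<in>{1..n}. f i > c" and tail_below: "\<forall>i\<in>{n<..l}. f i \<le> c"
  shows "Max (f ` {1..l}) = Max (f ` {1..n})"
proof (rule antisym)
  obtain i0 where i0: "i0 \<in> {1..n}" "f i0 > c"
    using exceed by blast
  have "c < Max (f ` {1..n})"
    using i0 by (meson Max_ge finite_atLeastAtMost finite_imageI image_eqI less_le_trans)
  then have "f i \<le> Max (f ` {1..n})" if "i \<in> {1..l}" for i
  proof (cases "i \<le> n")
    case True
    then show ?thesis using that by (intro Max_ge) auto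
  next
    case False
    then have "f i \<le> c" using that tail_below by auto
    then show ?thesis using \<open>c < Max (f ` {1..n})\<close> by linarith
  qed
  then show "Max (f ` {1..l}) \<le> Max (f ` {1..n})"
    using assms(1,2) by (subst Max_le_iff) auto
  show "Max (f ` {1..n}) \<le> Max (f ` {1..l})"
    using assms(1,2) by (intro Max_mono) auto
qed

lemma blockD_eq_blockDt:
  fixes X :: "int \<Rightarrow> 'a \<Rightarrow> real"
  assumes len: "int N + int m = 2 ^ j" "N \<ge> 1"
    and exceed: "\<exists>i\<in>{1..int N}. X (2 ^ j * (int k - 1) + i) \<omega> > c"
    and tail_below: "\<forall>i\<in>{int N<..2 ^ j}. X (2 ^ j * (int k - 1) + i) \<omega> \<le> c"
  shows "blockD X j k \<omega> = blockDt X m j k \<omega>"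
proof -
  have "2 ^ j - int m = int N" "1 \<le> int N" "int N \<le> 2 ^ j"
    using len by linarith+
  then show ?thesis
    unfolding blockD_def blockDt_def
    using Max_prefix_if_tail_below[OF _ _ exceed tail_below] by (simp only:)
qed

lemma block_ratio_deviation_forces_level:
  fixes X :: "int \<Rightarrow> 'a \<Rightarrow> real"
  assumes pos: "\<And>t. X t \<omega> > 0"
    and len: "int N + int m = 2 ^ j" "N \<ge> 1" and \<epsilon>: "\<epsilon> \<ge> 0"
    and deviates: "\<bar>blockD X j k \<omega> / blockDt X m j k \<omega> - 1\<bar> > \<epsilon>"
  shows "(\<forall>i\<in>{1..int N}. X (2 ^ j * (int k - 1) + i) \<omega> \<le> c)
       \<or> (\<exists>i\<in>{int N<..2 ^ j}. X (2 ^ j * (int k - 1) + i) \<omega> > c)"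
proof (rule ccontr)
  assume "\<not> ?thesis"
  then have same: "blockD X j k \<omega> = blockDt X m j k \<omega>"
    by (intro blockD_eq_blockDt[OF len]) (auto simp: not_le)
  have "X (2 ^ j * (int k - 1) + 1) \<omega> \<le> blockDt X m j k \<omega>"
    unfolding blockDt_def using len by (intro Max_ge) auto
  then have "blockDt X m j k \<omega> > 0"
    using pos[of "2 ^ j * (int k - 1) + 1"] by linarith
  then show False
    using same deviates \<epsilon> by simp
qed

lemma block_ratio_deviation_bound:
  fixes X :: "int \<Rightarrow> 'a \<Rightarrow> real"
  assumes "prob_space M" and meas: "\<And>t. X t \<in> borel_measurable M"
    and pos: "\<And>t \<omega>. \<omega> \<in> space M \<Longrightarrow> X t \<omega> > 0"
    and stat: "strictly_stationary M X"
    and len: "int N + int m = 2 ^ j" "N \<ge> 1" and \<epsilon>: "\<epsilon> \<ge> 0"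
  shows "measure M {\<omega>\<in>space M. \<bar>blockD X j k \<omega> / blockDt X m j k \<omega> - 1\<bar> > \<epsilon>}
       \<le> measure M {\<omega>\<in>space M. run_max X N \<omega> \<le> c} + real m * measure M {\<omega>\<in>space M. X 0 \<omega> > c}"
proof -
  interpret prob_space M by fact
  define h where "h = 2 ^ j * (int k - 1)"
  define E where "E = {\<omega>\<in>space M. \<bar>blockD X j k \<omega> / blockDt X m j k \<omega> - 1\<bar> > \<epsilon>}"
  define A where "A = {\<omega>\<in>space M. \<forall>i\<in>{1..int N}. X (h + i) \<omega> \<le> c}"
  define B where "B i = {\<omega>\<in>space M. X (h + i) \<omega> > c}" for i
  have A_event: "A \<in> events"
    unfolding A_def using meas
    by (intro sets.sets_Collect_finite_All) (auto simp: borel_measurable_iff_le[symmetric])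
  have B_event: "B i \<in> events" for i
    unfolding B_def using meas by (simp add: borel_measurable_iff_greater[symmetric])
  have "E \<subseteq> A \<union> (\<Union>i\<in>{int N<..2 ^ j}. B i)"
  proof
    fix \<omega> assume "\<omega> \<in> E"
    then show "\<omega> \<in> A \<union> (\<Union>i\<in>{int N<..2 ^ j}. B i)"
      using block_ratio_deviation_forces_level[of X \<omega> N m j \<epsilon> k c] pos len \<epsilon>
      unfolding E_def A_def B_def h_def by auto
  qed
  then have "measure M E \<le> measure M A + measure M (\<Union>i\<in>{int N<..2 ^ j}. B i)"
    using A_event B_event by (intro order.trans[OF finite_measure_mono measure_Un_le]) auto
  also have "measure M (\<Union>i\<in>{int N<..2 ^ j}. B i) \<le> (\<Sum>i\<in>{int N<..2 ^ j}. measure M (B i))"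
    using B_event by (intro finite_measure_subadditive_finite) auto
  also have "\<dots> = (\<Sum>i\<in>{int N<..2 ^ j}. measure M {\<omega>\<in>space M. X 0 \<omega> > c})"
    unfolding B_def by (intro sum.cong refl stationary_marginal_tail[OF stat meas])
  also have "\<dots> = real m * measure M {\<omega>\<in>space M. X 0 \<omega> > c}"
    using len(1) by (simp add: eq_diff_eq[symmetric])
  also have "measure M A = measure M {\<omega>\<in>space M. run_max X N \<omega> \<le> c}"
    unfolding A_def by (rule stationary_window_max[OF stat meas len(2)])
  finally show ?thesis
    unfolding E_def by simp
qed

lemma prob_le_exp_of_cfun_bound:
  fixes p y a \<alpha> :: real
  assumes "0 < p" "0 < y" "a \<le> - ln p * y powr \<alpha>"
  shows "p \<le> exp (- a * y powr (- \<alpha>))"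
proof -
  have "a * y powr (- \<alpha>) \<le> - ln p * y powr \<alpha> * y powr (- \<alpha>)"
    using assms(3) by (intro mult_right_mono) auto
  also have "\<dots> = - ln p"
    using assms(2) by (simp add: mult.assoc powr_add[symmetric])
  finally have "ln p \<le> - a * y powr (- \<alpha>)"
    by simp
  then show ?thesis
    using assms(1) by (metis exp_ln exp_le_cancel_iff)
qed

lemma condition1_cfun_lower_bound:
  assumes "condition1 M X \<alpha> cX" and cX: "cX > 0"
  obtains a where "a > 0" "\<And>y. y > 0 \<Longrightarrow> eventually (\<lambda>N. a \<le> cfun M X \<alpha> N y) sequentially"
proof -
  obtain \<beta> \<theta> c1 where \<beta>: "\<beta> > 0" and \<theta>: "\<theta> > 0"
    and bound: "\<And>n x. n \<ge> 1 \<Longrightarrow> x > 0 \<Longrightarrow> \<bar>cfun M X \<alpha> n x - \<theta> * cX\<bar> \<le> c1 x * real n powr (- \<beta>)"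
    using assms(1) unfolding condition1_def by blast
  define a where "a = \<theta> * cX / 2"
  have "eventually (\<lambda>N. a \<le> cfun M X \<alpha> N y) sequentially" if y: "y > 0" for y
  proof -
    have "(\<lambda>N. c1 y * real N powr (- \<beta>)) \<longlonglongrightarrow> 0"
      using \<beta> by real_asymp
    then have "eventually (\<lambda>N. c1 y * real N powr (- \<beta>) < a) sequentially"
      using \<theta> cX by (intro order_tendstoD) (auto simp: a_def)
    then show ?thesis
      using eventually_ge_at_top[of 1]
    proof eventually_elim
      case (elim N)
      then show ?case
        using bound[of N y] y unfolding a_def by linarith
    qed
  qed
  moreover have "a > 0"
    using \<theta> cX by (simp add: a_def)
  ultimately show ?thesis
    using that by blast
qed

lemma small_scaled_max_prob:
  assumes cond1: "condition1 M X \<alpha> cX" and cX: "cX > 0" and \<alpha>: "\<alpha> > 0"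
    and max_prob_pos: "\<And>n x. n \<ge> 1 \<Longrightarrow> x > 0 \<Longrightarrow>
       0 < measure M {\<omega> \<in> space M. run_max X n \<omega> \<le> real n powr (1 / \<alpha>) * x}"
    and r: "r > 0"
  obtains y where "y > 0"
    "eventually (\<lambda>N. measure M {\<omega>\<in>space M. run_max X N \<omega> \<le> real N powr (1 / \<alpha>) * y} < r) sequentially"
proof -
  obtain a where a: "a > 0" and cfun_ge: "\<And>y. y > 0 \<Longrightarrow> eventually (\<lambda>N. a \<le> cfun M X \<alpha> N y) sequentially"
    using condition1_cfun_lower_bound[OF cond1 cX] by blast
  have "((\<lambda>y. exp (- a * y powr (- \<alpha>))) \<longlongrightarrow> 0) (at_right 0)"
    using a \<alpha> by real_asymp
  then have "eventually (\<lambda>y. y > 0 \<and> exp (- a * y powr (- \<alpha>)) < r) (at_right 0)"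
    using r eventually_at_right_less[of 0] by (auto intro: eventually_conj order_tendstoD)
  then obtain y where y: "y > 0" "exp (- a * y powr (- \<alpha>)) < r"
    using eventually_happens[of _ "at_right (0::real)"] by auto
  have "eventually (\<lambda>N. measure M {\<omega>\<in>space M. run_max X N \<omega> \<le> real N powr (1 / \<alpha>) * y} < r) sequentially"
    using cfun_ge[OF y(1)] eventually_ge_at_top[of 1]
  proof eventually_elim
    case (elim N)
    then show ?case
      using prob_le_exp_of_cfun_bound[OF max_prob_pos[OF _ y(1)] y(1), of N a \<alpha>] y(2)
      unfolding cfun_def by simp
  qed
  with y(1) show ?thesis
    using that by blast
qed

(* Choosing c_N = N^(1/alpha) y makes both error terms of the central estimate
   small for large N, since then c_N -> infinity and the tail of X_0 vanishes. *)
lemma error_levels_exist: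
  fixes X :: "int \<Rightarrow> 'a \<Rightarrow> real"
  assumes cond1: "condition1 M X \<alpha> cX" and cX: "cX > 0" and \<alpha>: "\<alpha> > 0"
    and max_prob_pos: "\<And>n x. n \<ge> 1 \<Longrightarrow> x > 0 \<Longrightarrow>
       0 < measure M {\<omega> \<in> space M. run_max X n \<omega> \<le> real n powr (1 / \<alpha>) * x}"
    and tail: "(\<lambda>x. measure M {\<omega> \<in> space M. X 0 \<omega> > x}) \<sim>[at_top] (\<lambda>x. cX * x powr (- \<alpha>))"
    and r: "r > 0"
  obtains c :: "nat \<Rightarrow> real" where
    "eventually (\<lambda>N. measure M {\<omega>\<in>space M. run_max X N \<omega> \<le> c N}
        + real m * measure M {\<omega>\<in>space M. X 0 \<omega> > c N} < r) sequentially"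
proof -
  obtain y where "y > 0" and small_max:
    "eventually (\<lambda>N. measure M {\<omega>\<in>space M. run_max X N \<omega> \<le> real N powr (1 / \<alpha>) * y} < r / 2) sequentially"
    using small_scaled_max_prob[OF cond1 cX \<alpha> max_prob_pos, of "r / 2"] r by auto
  have "((\<lambda>x. cX * x powr (- \<alpha>)) \<longlongrightarrow> 0) at_top"
    using \<alpha> by real_asymp
  then have tail_vanishes: "((\<lambda>x. measure M {\<omega> \<in> space M. X 0 \<omega> > x}) \<longlongrightarrow> 0) at_top"
    by (rule asymp_equiv_tendsto_transfer[OF asymp_equiv_symI[OF tail]])
  have "filterlim (\<lambda>N. real N powr (1 / \<alpha>) * y) at_top sequentially"
    using \<alpha> \<open>y > 0\<close> by real_asymp
  then have "(\<lambda>N. real m * measure M {\<omega>\<in>space M. X 0 \<omega> > real N powr (1 / \<alpha>) * y}) \<longlonglongrightarrow> 0"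
    by (intro tendsto_mult_right_zero filterlim_compose[OF tail_vanishes])
  then have "eventually (\<lambda>N. real m * measure M {\<omega>\<in>space M. X 0 \<omega> > real N powr (1 / \<alpha>) * y} < r / 2)
      sequentially"
    using r by (intro order_tendstoD) auto
  with small_max have "eventually (\<lambda>N. measure M {\<omega>\<in>space M. run_max X N \<omega> \<le> real N powr (1 / \<alpha>) * y}
      + real m * measure M {\<omega>\<in>space M. X 0 \<omega> > real N powr (1 / \<alpha>) * y} < r) sequentially"
    by eventually_elim linarith
  then show ?thesis
    by (rule that[of "\<lambda>N. real N powr (1 / \<alpha>) * y"])
qed

theorem mainTheorem8:
  fixes M :: "'a measure" and X :: "int \<Rightarrow> 'a \<Rightarrow> real"
    and \<alpha> cX :: real and m k :: nat
  assumes "prob_space M"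
    and meas: "\<And>t. X t \<in> borel_measurable M"
    and pos: "\<And>t \<omega>. \<omega> \<in> space M \<Longrightarrow> X t \<omega> > 0"
    and stat: "strictly_stationary M X"
    and \<alpha>: "\<alpha> > 0" and cX: "cX > 0"
    and tail: "\<And>t. (\<lambda>x. measure M {\<omega> \<in> space M. X t \<omega> > x}) \<sim>[at_top] (\<lambda>x. cX * x powr (- \<alpha>))"
    and cdef: "\<And>n x. n \<ge> 1 \<Longrightarrow> x > 0 \<Longrightarrow>
       0 < measure M {\<omega> \<in> space M. run_max X n \<omega> \<le> real n powr (1 / \<alpha>) * x} \<and>
       measure M {\<omega> \<in> space M. run_max X n \<omega> \<le> real n powr (1 / \<alpha>) * x} < 1"
    and cond1: "condition1 M X \<alpha> cX"
    and k: "k \<ge> 1"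
  shows "\<forall>\<epsilon>>0. (\<lambda>j. measure M {\<omega> \<in> space M. \<bar>blockD X j k \<omega> / blockDt X m j k \<omega> - 1\<bar> > \<epsilon>})
           \<longlonglongrightarrow> 0"
proof (intro allI impI)
  fix \<epsilon> :: real
  assume \<epsilon>: "\<epsilon> > 0"
  interpret prob_space M by fact
  let ?E = "\<lambda>j. measure M {\<omega> \<in> space M. \<bar>blockD X j k \<omega> / blockDt X m j k \<omega> - 1\<bar> > \<epsilon>}"
  show "?E \<longlonglongrightarrow> 0"
  proof (rule order_tendstoI)
    show "eventually (\<lambda>j. a < ?E j) sequentially" if "a < 0" for a
      using that by (simp add: less_le_trans[OF _ measure_nonneg])
  next
    fix r :: real
    assume "r > 0"
    obtain c :: "nat \<Rightarrow> real" where "eventually (\<lambda>N. measure M {\<omega>\<in>space M. run_max X N \<omega> \<le> c N}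
        + real m * measure M {\<omega>\<in>space M. X 0 \<omega> > c N} < r) sequentially"
      using error_levels_exist[OF cond1 cX \<alpha> _ tail \<open>r > 0\<close>] cdef by blast
    with eventually_ge_at_top[of 1] have "eventually (\<lambda>N. N \<ge> 1 \<and>
        measure M {\<omega>\<in>space M. run_max X N \<omega> \<le> c N}
        + real m * measure M {\<omega>\<in>space M. X 0 \<omega> > c N} < r) sequentially"
      by eventually_elim auto
    moreover have "filterlim (\<lambda>j. 2 ^ j - m) sequentially sequentially"
      by real_asymp
    ultimately have "eventually (\<lambda>j. 2 ^ j - m \<ge> 1 \<and>
        measure M {\<omega>\<in>space M. run_max X (2 ^ j - m) \<omega> \<le> c (2 ^ j - m)}
        + real m * measure M {\<omega>\<in>space M. X 0 \<omega> > c (2 ^ j - m)} < r) sequentially"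
      by (rule eventually_compose_filterlim)
    then show "eventually (\<lambda>j. ?E j < r) sequentially"
    proof eventually_elim
      case (elim j)
      then have "m \<le> 2 ^ j"
        by linarith
      then have "int (2 ^ j - m) + int m = 2 ^ j"
        by (simp add: of_nat_diff)
      then have "?E j \<le> measure M {\<omega>\<in>space M. run_max X (2 ^ j - m) \<omega> \<le> c (2 ^ j - m)}
          + real m * measure M {\<omega>\<in>space M. X 0 \<omega> > c (2 ^ j - m)}"
        using \<open>prob_space M\<close> meas pos stat elim \<epsilon> by (intro block_ratio_deviation_bound) auto
      with elim show ?case
        by linarith
    qed
  qed
qed

end
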